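(* Let $\underline\gamma$ be an $\infty$-complete infinite path in a Rauzy diagram, starting at $\pi$, and let $w\in\mathbb R^{\mathcal A}$, $w\neq0$. The set $\mathrm{Aff}(\underline\gamma,w)$ is nonempty if and only if the hyperplane $\{\lambda:\sum_\alpha\lambda_\alpha w_\alpha=0\}$ contains some $\lambda\in(\mathbb R_{>0})^{\mathcal A}$ such that the standard i.e.m. $T_{\pi,\lambda}$ has Rauzy–Veech path equal to $\underline\gamma$. In that case the set $\mathrm{Aff}^{(1)}(\underline\gamma,w)$, parametrized by the vector of lengths $(|I^t_\alpha|)_{\alpha\in\mathcal A}$, is convex and compact.
   Context: Affine i.e.m., standard i.e.m. $T_{\pi,\lambda}$, slope vector, Rauzy–Veech algorithm and Rauzy diagram as usual: the Rauzy–Veech step replaces the map by its first return to $(0,\max(u^t_{d-1},u^b_{d-1}))$ where $u^t_{d-1},u^b_{d-1}$ are the left endpoints of the last top and last bottom intervals; the arrow has top type with winner $\alpha_t$ if $u^t_{d-1}<u^b_{d-1}$ and bottom type with winner $\alpha_b$ otherwise ($\pi_t(\alpha_t)=\pi_b(\alpha_b)=d$). A map with no connection has an infinite Rauzy–Veech path. A path is complete if every letter of $\mathcal A$ is the winner of at least one of its arrows, and an infinite path is $\infty$-complete if it is a concatenation of infinitely many complete paths. $\mathrm{Aff}(\underline\gamma,w)$ is the set of affine i.e.m. with slope vector $\exp w$ (i.e. $|I^b_\alpha|=e^{w_\alpha}|I^t_\alpha|$) whose Rauzy–Veech path is $\underline\gamma$; $\mathrm{Aff}^{(1)}(\underline\gamma,w)$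 is the subset of those defined on $[0,1]$. *)

theory Defs
  imports "HOL-Analysis.Analysis"
begin

text \<open>The alphabet is a finite type 'a, d = CARD('a).  A combinatorial datum
 pi = (pi_t, pi_b) is a pair of bijections 'a -> {1..d}.\<close>

type_synonym 'a comb = "('a \<Rightarrow> nat) \<times> ('a \<Rightarrow> nat)"

definition valid_comb :: "'a::finite comb \<Rightarrow> bool" where
  "valid_comb p \<longleftrightarrow> bij_betw (fst p) UNIV {1..CARD('a)} \<and> bij_betw (snd p) UNIV {1..CARD('a)}"

definition irreducible :: "'a::finite comb \<Rightarrow> bool" where
  "irreducible p \<longleftrightarrow> valid_comb p \<and>
     (\<forall>k. 1 \<le> k \<and> k < CARD('a) \<longrightarrow> fst p -` {1..k} \<noteq> snd p -` {1..k})"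

text \<open>Last letters on top and bottom: pi_t(alpha_t) = pi_b(alpha_b) = d.\<close>
definition top_last :: "'a::finite comb \<Rightarrow> 'a" where
  "top_last p = (THE a. fst p a = CARD('a))"

definition bot_last :: "'a::finite comb \<Rightarrow> 'a" where
  "bot_last p = (THE a. snd p a = CARD('a))"

datatype arrow_type = Top | Bot

text \<open>Top type: the loser alpha_b is moved in the bottom
 row to the position right after the winner alpha_t.  Bottom type: the loser alpha_t is
 moved in the top row right after the winner alpha_b.\<close>
definition rauzy_move :: "arrow_type \<Rightarrow> 'a::finite comb \<Rightarrow> 'a comb" where
  "rauzy_move t p = (let aT = top_last p; aB = bot_last p in
     (case t of
        Top \<Rightarrow> (fst p, \<lambda>b. if b = aB then snd p aT + 1
                          else if snd p b > snd p aT then snd p b + 1 else snd p b)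
      | Bot \<Rightarrow> (\<lambda>b. if b = aT then fst p aB + 1
                     else if fst p b > fst p aB then fst p b + 1 else fst p b, snd p)))"

definition winner :: "arrow_type \<Rightarrow> 'a::finite comb \<Rightarrow> 'a" where
  "winner t p = (case t of Top \<Rightarrow> top_last p | Bot \<Rightarrow> bot_last p)"

text \<open>An infinite path in the Rauzy diagram starting aT pi is given by pi and the
 sequence of types of its arrows; the n-th vertex is obtained by the Rauzy moves.\<close>
fun path_vertex :: "'a::finite comb \<Rightarrow> (nat \<Rightarrow> arrow_type) \<Rightarrow> nat \<Rightarrow> 'a comb" where
  "path_vertex p g 0 = p"
| "path_vertex p g (Suc n) = rauzy_move (g n) (path_vertex p g n)"

definition path_winner :: "'a::finite comb \<Rightarrow> (nat \<Rightarrow> arrow_type) \<Rightarrow> nat \<Rightarrow> 'a" where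
  "path_winner p g n = winner (g n) (path_vertex p g n)"

definition complete_segment :: "'a::finite comb \<Rightarrow> (nat \<Rightarrow> arrow_type) \<Rightarrow> nat \<Rightarrow> nat \<Rightarrow> bool" where
  "complete_segment p g a b \<longleftrightarrow> (\<forall>x::'a. \<exists>n\<in>{a..<b}. path_winner p g n = x)"

definition infty_complete :: "'a::finite comb \<Rightarrow> (nat \<Rightarrow> arrow_type) \<Rightarrow> bool" where
  "infty_complete p g \<longleftrightarrow> (\<exists>ns::nat \<Rightarrow> nat. strict_mono ns \<and> ns 0 = 0 \<and>
      (\<forall>k. complete_segment p g (ns k) (ns (Suc k))))"

text \<open>An affine i.e.m. on [0,L) is determined by its combinatorial datum and the
 lengths of the top intervals I^t_alpha (ordered by pi_t) and bottom intervals
 I^b_alpha (ordered by pi_b); it maps I^t_alpha affinely increasingly onto I^b_alpha.\<close>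
record 'a aiem =
  ptop :: "'a \<Rightarrow> nat"
  pbot :: "'a \<Rightarrow> nat"
  ltop :: "real ^ 'a"
  lbot :: "real ^ 'a"

definition comb_of :: "('a::finite, 'b) aiem_scheme \<Rightarrow> 'a comb" where
  "comb_of D = (ptop D, pbot D)"

definition is_aiem :: "'a::finite aiem \<Rightarrow> bool" where
  "is_aiem D \<longleftrightarrow> valid_comb (comb_of D) \<and> (\<forall>a. ltop D $ a > 0) \<and> (\<forall>a. lbot D $ a > 0)
     \<and> (\<Sum>a\<in>UNIV. ltop D $ a) = (\<Sum>a\<in>UNIV. lbot D $ a)"

text \<open>The map itself (for reference): left endpoints of the top/bottom intervals.\<close>
definition u_top :: "'a::finite aiem \<Rightarrow> 'a \<Rightarrow> real" where
  "u_top D a = (\<Sum>b\<in>{b. ptop D b < ptop D a}. ltop D $ b)"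

definition u_bot :: "'a::finite aiem \<Rightarrow> 'a \<Rightarrow> real" where
  "u_bot D a = (\<Sum>b\<in>{b. pbot D b < pbot D a}. lbot D $ b)"

definition aiem_map :: "'a::finite aiem \<Rightarrow> real \<Rightarrow> real" where
  "aiem_map D x = (let a = (THE a. u_top D a \<le> x \<and> x < u_top D a + ltop D $ a) in
      u_bot D a + (lbot D $ a / ltop D $ a) * (x - u_top D a))"

definition rv_type :: "'a::finite aiem \<Rightarrow> arrow_type" where
  "rv_type D = (if u_top D (top_last (comb_of D)) < u_bot D (bot_last (comb_of D)) then Top else Bot)"

text \<open>One Rauzy-Veech step: the data of the first return map to
 (0, max(u^t_{d-1}, u^b_{d-1})).\<close>
definition rv_step :: "'a::finite aiem \<Rightarrow> 'a aiem" where
  "rv_step D = (let p = comb_of D; aT = top_last p; aB = bot_last p; t = rv_type D;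
       p' = rauzy_move t p in
     (case t of
       Top \<Rightarrow> (let s = lbot D $ aT / ltop D $ aT in
          \<lparr> ptop = fst p', pbot = snd p',
            ltop = (\<chi> b. if b = aT then ltop D $ aT - lbot D $ aB else ltop D $ b),
            lbot = (\<chi> b. if b = aT then lbot D $ aT - s * lbot D $ aB
                         else if b = aB then s * lbot D $ aB else lbot D $ b) \<rparr>)
     | Bot \<Rightarrow> (let s = lbot D $ aB / ltop D $ aB in
          \<lparr> ptop = fst p', pbot = snd p',
            ltop = (\<chi> b. if b = aB then ltop D $ aB - ltop D $ aT / s
                         else if b = aT then ltop D $ aT / s else ltop D $ b),
            lbot = (\<chi> b. if b = aB then lbot D $ aB - ltop D $ aT else lbot D $ b) \<rparr>)))"

text \<open>D has the infinite Rauzy-Veech path (comb_of D, g): the algorithm never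
 degenerates and the n-th arrow has type g n.\<close>
definition has_rv_path :: "'a::finite aiem \<Rightarrow> (nat \<Rightarrow> arrow_type) \<Rightarrow> bool" where
  "has_rv_path D g \<longleftrightarrow> (\<forall>n. is_aiem ((rv_step ^^ n) D) \<and> rv_type ((rv_step ^^ n) D) = g n)"

definition standard_iem :: "'a::finite comb \<Rightarrow> real ^ 'a \<Rightarrow> 'a aiem" where
  "standard_iem p l = \<lparr> ptop = fst p, pbot = snd p, ltop = l, lbot = l \<rparr>"

text \<open>Aff(gamma, w), gamma = infinite path from p with arrow types g: affine i.e.m.
 with |I^b_a| = exp(w_a) |I^t_a| and Rauzy-Veech path gamma.\<close>
definition Aff :: "'a::finite comb \<Rightarrow> (nat \<Rightarrow> arrow_type) \<Rightarrow> real ^ 'a \<Rightarrow> 'a aiem set" where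
  "Aff p g w = {D. is_aiem D \<and> comb_of D = p \<and> (\<forall>a. lbot D $ a = exp (w $ a) * ltop D $ a)
                  \<and> has_rv_path D g}"

definition Aff1 :: "'a::finite comb \<Rightarrow> (nat \<Rightarrow> arrow_type) \<Rightarrow> real ^ 'a \<Rightarrow> (real ^ 'a) set" where
  "Aff1 p g w = {ltop D | D. D \<in> Aff p g w \<and> (\<Sum>a\<in>UNIV. ltop D $ a) = 1}"

end

theory Submission
  imports Defs
begin

text \<open>Run the Rauzy--Veech algorithm on an affine i.e.m.\ with log-slope vector \<open>w\<close> and top
  lengths \<open>v\<close>: after \<open>n\<close> steps it is the affine i.e.m.\ with log-slopes \<open>W\<^sub>n\<close> and top lengths
  \<open>X\<^sub>n v\<close>, where \<open>W\<^sub>n\<close> depends only on \<open>w\<close> and the path and \<open>X\<^sub>n\<close> is linear and invertible, and the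
  path is followed forever iff every \<open>X\<^sub>n v\<close> is positive.  Two pairings are invariant: the
  length defect \<open>(exp W\<^sub>n - 1)\<cdot>X\<^sub>n v\<close>, and \<open>W\<^sub>n\<cdot>X\<^sup>0\<^sub>n v\<close> for the standard induction
  \<open>X\<^sup>0\<^sub>n\<close>.  A point on either side of the equivalence is positive along the path, so the
  corresponding pairing forces \<open>W\<^sub>n\<close> to have entries of both signs for every \<open>n\<close>.  Pulling
  back basis vectors and taking a limit in the simplex then gives a nonzero vector that stays
  nonnegative along the path and lies in the hyperplane required on the other side;
  \<open>\<infinity>\<close>-completeness upgrades nonnegative to positive.  The same description exhibits
  \<open>Aff1\<close> as the intersection of a closed convex cone with the simplex and a hyperplane.\<close>

section \<open>Rauzy moves preserve irreducibility\<close>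

lemma bij_betw_the_last:
  fixes f :: "'a::finite \<Rightarrow> nat"
  assumes "bij_betw f UNIV {1..CARD('a)}"
  shows "f b = CARD('a) \<longleftrightarrow> b = (THE a. f a = CARD('a))" and "1 \<le> f b" and "f b \<le> CARD('a)"
proof -
  have range: "range f = {1..CARD('a)}" and "inj f"
    using assms unfolding bij_betw_def by blast+
  have "CARD('a) \<in> range f"
    unfolding range using finite_UNIV_card_ge_0[where 'a='a] by simp
  then obtain a where "f a = CARD('a)"
    by (metis rangeE)
  with \<open>inj f\<close> have ex1: "\<exists>!a. f a = CARD('a)"
    by (metis inj_eq)
  show "f b = CARD('a) \<longleftrightarrow> b = (THE a. f a = CARD('a))"
    using the1_equality[OF ex1, of b] theI'[OF ex1] by auto
  show "1 \<le> f b" "f b \<le> CARD('a)"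
    using range by auto
qed

lemma valid_comb_top_last:
  assumes "valid_comb (q::'a::finite comb)"
  shows "fst q b = CARD('a) \<longleftrightarrow> b = top_last q" and "1 \<le> fst q b" and "fst q b \<le> CARD('a)"
  using bij_betw_the_last assms unfolding valid_comb_def top_last_def by blast+

lemma valid_comb_bot_last:
  assumes "valid_comb (q::'a::finite comb)"
  shows "snd q b = CARD('a) \<longleftrightarrow> b = bot_last q" and "1 \<le> snd q b" and "snd q b \<le> CARD('a)"
  using bij_betw_the_last assms unfolding valid_comb_def bot_last_def by blast+

definition move_after :: "('a \<Rightarrow> nat) \<Rightarrow> 'a \<Rightarrow> 'a \<Rightarrow> 'a \<Rightarrow> nat" where
  "move_after f x y b = (if b = y then f x + 1 else if f x < f b then f b + 1 else f b)"

lemma rauzy_move_Top: "rauzy_move Top q = (fst q, move_after (snd q) (top_last q) (bot_last q))"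
  and rauzy_move_Bot: "rauzy_move Bot q = (move_after (fst q) (bot_last q) (top_last q), snd q)"
  by (simp_all add: rauzy_move_def move_after_def Let_def fun_eq_iff)

lemma top_last_rauzy_move_Top: "top_last (rauzy_move Top q) = top_last q"
  and bot_last_rauzy_move_Bot: "bot_last (rauzy_move Bot q) = bot_last q"
  by (simp_all add: rauzy_move_Top rauzy_move_Bot top_last_def bot_last_def)

lemma bij_betw_move_after:
  fixes f :: "'a::finite \<Rightarrow> nat"
  assumes bij: "bij_betw f UNIV {1..CARD('a)}" and "x \<noteq> y" and fy: "f y = CARD('a)"
  shows "bij_betw (move_after f x y) UNIV {1..CARD('a)}"
proof -
  have "inj f" and range: "range f = {1..CARD('a)}"
    using bij by (auto simp: bij_betw_def)
  have below_last: "f b < CARD('a)" if "b \<noteq> y" for b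
    using \<open>inj f\<close> range fy that by (metis atLeastAtMost_iff injD nat_less_le rangeI)
  have inj: "inj (move_after f x y)"
    using \<open>inj f\<close> by (intro injI) (auto simp: move_after_def injD split: if_splits)
  have "range (move_after f x y) \<subseteq> {1..CARD('a)}"
    using range below_last \<open>x \<noteq> y\<close> by (auto simp: move_after_def Suc_leI)
  moreover have "card (range (move_after f x y)) = CARD('a)"
    using inj by (simp add: card_image)
  ultimately have "range (move_after f x y) = {1..CARD('a)}"
    by (intro card_subset_eq) auto
  then show ?thesis
    using inj by (simp add: bij_betw_def)
qed

lemma move_after_preserves_irreducible:
  fixes f h :: "'a::finite \<Rightarrow> nat"
  assumes bij: "bij_betw f UNIV {1..CARD('a)}" and "x \<noteq> y" and fy: "f y = CARD('a)"
    and hx: "h x = CARD('a)"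
    and irr: "h -` {1..k} \<noteq> f -` {1..k}" and k: "1 \<le> k" "k < CARD('a)"
  shows "h -` {1..k} \<noteq> move_after f x y -` {1..k}"
proof
  assume eq: "h -` {1..k} = move_after f x y -` {1..k}"
  have "x \<notin> h -` {1..k}"
    using hx k by auto
  moreover have ge1: "1 \<le> f b" for b
    using bij by (auto simp: bij_betw_def)
  ultimately have "k \<le> f x"
    using eq \<open>x \<noteq> y\<close> by (auto simp: move_after_def split: if_splits)
  then have "f -` {1..k} = move_after f x y -` {1..k}"
    using fy k ge1 by (auto simp: move_after_def split: if_splits)
  with eq irr show False
    by simp
qed

lemma irreducible_top_last_ne_bot_last:
  assumes irr: "irreducible (q::'a::finite comb)" and "2 \<le> CARD('a)"
  shows "top_last q \<noteq> bot_last q"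
proof
  assume eq: "top_last q = bot_last q"
  have v: "valid_comb q" and irr': "\<And>k. 1 \<le> k \<Longrightarrow> k < CARD('a) \<Longrightarrow> fst q -` {1..k} \<noteq> snd q -` {1..k}"
    using irr by (auto simp: irreducible_def)
  let ?k = "CARD('a) - 1"
  have "b \<in> fst q -` {1..?k} \<longleftrightarrow> b \<in> snd q -` {1..?k}" for b
  proof -
    have "fst q b \<noteq> CARD('a) \<longleftrightarrow> snd q b \<noteq> CARD('a)"
      using valid_comb_top_last(1)[OF v] valid_comb_bot_last(1)[OF v] eq by simp
    then show ?thesis
      using valid_comb_top_last(2,3)[OF v, of b] valid_comb_bot_last(2,3)[OF v, of b]
      by (simp only: vimage_eq atLeastAtMost_iff) linarith
  qed
  then have "fst q -` {1..?k} = snd q -` {1..?k}"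
    by blast
  moreover have "fst q -` {1..?k} \<noteq> snd q -` {1..?k}"
    using \<open>2 \<le> CARD('a)\<close> by (intro irr') simp_all
  ultimately show False
    by contradiction
qed

lemma irreducible_rauzy_move:
  assumes irr: "irreducible (q::'a::finite comb)" and "2 \<le> CARD('a)"
  shows "irreducible (rauzy_move t q)"
proof -
  have v: "valid_comb q" and irr': "\<And>k. 1 \<le> k \<Longrightarrow> k < CARD('a) \<Longrightarrow> fst q -` {1..k} \<noteq> snd q -` {1..k}"
    using irr by (auto simp: irreducible_def)
  have ne: "top_last q \<noteq> bot_last q"
    using irreducible_top_last_ne_bot_last[OF assms] .
  have fst_bij: "bij_betw (fst q) UNIV {1..CARD('a)}" and snd_bij: "bij_betw (snd q) UNIV {1..CARD('a)}"
    using v by (auto simp: valid_comb_def)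
  have top: "fst q (top_last q) = CARD('a)" and bot: "snd q (bot_last q) = CARD('a)"
    using valid_comb_top_last(1)[OF v] valid_comb_bot_last(1)[OF v] by simp_all
  show ?thesis
  proof (cases t)
    case Top
    have "fst q -` {1..k} \<noteq> move_after (snd q) (top_last q) (bot_last q) -` {1..k}"
      if "1 \<le> k" "k < CARD('a)" for k
      using move_after_preserves_irreducible[OF snd_bij ne bot top irr'[OF that] that] .
    then show ?thesis
      using Top fst_bij bij_betw_move_after[OF snd_bij ne bot]
      by (simp add: rauzy_move_Top irreducible_def valid_comb_def)
  next
    case Bot
    have "move_after (fst q) (bot_last q) (top_last q) -` {1..k} \<noteq> snd q -` {1..k}"
      if "1 \<le> k" "k < CARD('a)" for k
      using move_after_preserves_irreducible[OF fst_bij ne[symmetric] top bot not_sym[OF irr'[OF that]] that]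
      by (rule not_sym)
    then show ?thesis
      using Bot snd_bij bij_betw_move_after[OF fst_bij ne[symmetric] top]
      by (simp add: rauzy_move_Bot irreducible_def valid_comb_def)
  qed
qed

section \<open>Winners along an \<open>\<infinity>\<close>-complete path\<close>

definition nondegenerate_path :: "'a::finite comb \<Rightarrow> (nat \<Rightarrow> arrow_type) \<Rightarrow> bool" where
  "nondegenerate_path p g \<longleftrightarrow>
     (\<forall>n. valid_comb (path_vertex p g n) \<and> top_last (path_vertex p g n) \<noteq> bot_last (path_vertex p g n))"

lemma irreducible_imp_nondegenerate_path:
  assumes "irreducible (p::'a::finite comb)" and "2 \<le> CARD('a)"
  shows "nondegenerate_path p g"
proof -
  have irr: "irreducible (path_vertex p g n)" for n
    by (induction n) (simp_all add: assms irreducible_rauzy_move)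
  then show ?thesis
    using irreducible_top_last_ne_bot_last[OF _ assms(2)] by (simp add: nondegenerate_path_def irreducible_def)
qed

lemma path_winner_eq:
  "path_winner p g n = (case g n of Top \<Rightarrow> top_last (path_vertex p g n) | Bot \<Rightarrow> bot_last (path_vertex p g n))"
  by (simp add: path_winner_def winner_def)

lemma path_winner_mem_last:
  "path_winner p g n \<in> {top_last (path_vertex p g n), bot_last (path_vertex p g n)}"
  by (simp add: path_winner_eq split: arrow_type.split)

lemma path_winner_mem_last_Suc:
  "path_winner p g n \<in> {top_last (path_vertex p g (Suc n)), bot_last (path_vertex p g (Suc n))}"
  by (cases "g n") (simp_all add: path_winner_eq top_last_rauzy_move_Top bot_last_rauzy_move_Bot)

lemma infty_complete_closed_letters_eq_UNIV:
  fixes S :: "'a::finite set"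
  assumes ic: "infty_complete p g" and "c \<in> S"
    and closed: "\<And>n. T \<le> n \<Longrightarrow> path_winner p g n \<in> S \<Longrightarrow>
                   {top_last (path_vertex p g n), bot_last (path_vertex p g n)} \<subseteq> S"
  shows "S = UNIV"
proof -
  let ?last = "\<lambda>n. {top_last (path_vertex p g n), bot_last (path_vertex p g n)}"
  obtain ns where ns: "strict_mono ns" "\<And>k. complete_segment p g (ns k) (ns (Suc k))"
    using ic by (auto simp: infty_complete_def)
  have "b \<in> S" for b
  proof -
    obtain n1 where n1: "ns T \<le> n1" "n1 < ns (Suc T)" "path_winner p g n1 = b"
      using ns(2)[of T] unfolding complete_segment_def by (meson atLeastLessThan_iff)
    obtain n2 where n2: "ns (Suc T) \<le> n2" "path_winner p g n2 = c"
      using ns(2)[of "Suc T"] unfolding complete_segment_def by (meson atLeastLessThan_iff)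
    have "T \<le> n1"
      using strict_mono_imp_increasing[OF ns(1), of T] n1(1) by simp
    have "n1 \<le> n2"
      using n1 n2 by simp
    then have "?last n1 \<subseteq> S"
    proof (induction rule: inc_induct)
      case base
      show ?case
        using closed \<open>T \<le> n1\<close> \<open>n1 \<le> n2\<close> n2(2) \<open>c \<in> S\<close> by simp
    next
      case (step n)
      then show ?case
        using closed \<open>T \<le> n1\<close> path_winner_mem_last_Suc[of p g n] by auto
    qed
    then show "b \<in> S"
      using path_winner_mem_last[of p g n1] n1(3) by auto
  qed
  then show ?thesis
    by auto
qed

section \<open>The Rauzy--Veech step in coordinates\<close>

text \<open>In the step functions \<open>x\<close> and \<open>y\<close> are the last top and bottom letters, \<open>W\<close> is the vector
  of logarithms of the slopes and \<open>v\<close> the vector of top lengths.\<close>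

definition slope_step :: "arrow_type \<Rightarrow> 'a::finite \<Rightarrow> 'a \<Rightarrow> real^'a \<Rightarrow> real^'a" where
  "slope_step t x y W = (case t of
      Top \<Rightarrow> (\<chi> b. if b = y then W $ y + W $ x else W $ b)
    | Bot \<Rightarrow> (\<chi> b. if b = x then W $ x + W $ y else W $ b))"

definition length_step :: "arrow_type \<Rightarrow> 'a::finite \<Rightarrow> 'a \<Rightarrow> real^'a \<Rightarrow> real^'a \<Rightarrow> real^'a" where
  "length_step t x y W v = (case t of
      Top \<Rightarrow> (\<chi> b. if b = x then v $ x - exp (W $ y) * v $ y else v $ b)
    | Bot \<Rightarrow> (\<chi> b. if b = y then v $ y - v $ x / exp (W $ y)
                   else if b = x then v $ x / exp (W $ y) else v $ b))"

definition length_unstep :: "arrow_type \<Rightarrow> 'a::finite \<Rightarrow> 'a \<Rightarrow> real^'a \<Rightarrow> real^'a \<Rightarrow> real^'a" where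
  "length_unstep t x y W z = (case t of
      Top \<Rightarrow> (\<chi> b. if b = x then z $ x + exp (W $ y) * z $ y else z $ b)
    | Bot \<Rightarrow> (\<chi> b. if b = y then z $ y + z $ x else if b = x then exp (W $ y) * z $ x else z $ b))"

text \<open>\<open>expm1_vec W \<bullet> v\<close> is the total length of the bottom intervals minus that of the top
  intervals.\<close>

definition expm1_vec :: "real^'a::finite \<Rightarrow> real^'a" where
  "expm1_vec W = (\<chi> b. exp (W $ b) - 1)"

lemma expm1_vec_0 [simp]: "expm1_vec 0 = 0"
  by (simp add: expm1_vec_def vec_eq_iff)

lemma inner_expm1_vec:
  "expm1_vec W \<bullet> x = (\<Sum>a\<in>UNIV. exp (W $ a) * x $ a) - (\<Sum>a\<in>UNIV. x $ a)"
  by (simp add: expm1_vec_def inner_vec_def left_diff_distrib sum_subtractf)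

lemma length_step_unstep: "x \<noteq> y \<Longrightarrow> length_step t x y W (length_unstep t x y W z) = z"
  and length_unstep_step: "x \<noteq> y \<Longrightarrow> length_unstep t x y W (length_step t x y W v) = v"
  by (cases t; auto simp: length_step_def length_unstep_def vec_eq_iff)+

lemma length_unstep_nonneg: "(\<And>b. 0 \<le> z $ b) \<Longrightarrow> 0 \<le> length_unstep t x y W z $ a"
  by (cases t) (auto simp: length_unstep_def)

lemma linear_length_step: "linear (length_step t x y W)"
  by (rule linearI; cases t)
    (auto simp: length_step_def vec_eq_iff algebra_simps add_divide_distrib diff_divide_distrib)

lemma slope_step_0: "slope_step t x y 0 = 0"
  by (cases t) (auto simp: slope_step_def vec_eq_iff)

lemma sum_eq_except_two:
  fixes f g :: "'a::finite \<Rightarrow> real"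
  assumes "x \<noteq> y" and "\<And>b. b \<noteq> x \<Longrightarrow> b \<noteq> y \<Longrightarrow> f b = g b"
  shows "(\<Sum>b\<in>UNIV. f b) = (\<Sum>b\<in>UNIV. g b) + (f x - g x) + (f y - g y)"
proof -
  have "(\<Sum>b\<in>UNIV. f b - g b) = (\<Sum>b\<in>{x, y}. f b - g b)"
    by (rule sum.mono_neutral_right) (use assms in auto)
  then show ?thesis
    using assms(1) by (simp add: sum_subtractf)
qed

lemma inner_expm1_vec_length_step:
  assumes "x \<noteq> y"
  shows "expm1_vec (slope_step t x y W) \<bullet> length_step t x y W v = expm1_vec W \<bullet> v"
  unfolding inner_vec_def inner_real_def
  by (cases t; subst sum_eq_except_two[OF assms, where g = "\<lambda>b. expm1_vec W $ b * v $ b"])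
    (use assms in \<open>auto simp: expm1_vec_def slope_step_def length_step_def exp_add field_simps\<close>)

lemma inner_slope_step_length_step_0:
  assumes "x \<noteq> y"
  shows "slope_step t x y W \<bullet> length_step t x y 0 v = W \<bullet> v"
  unfolding inner_vec_def inner_real_def
  by (cases t; subst sum_eq_except_two[OF assms, where g = "\<lambda>b. W $ b * v $ b"])
    (use assms in \<open>auto simp: slope_step_def length_step_def algebra_simps\<close>)

lemma length_step_zero_stays_zero:
  assumes "\<And>b. 0 \<le> v $ b" and "\<And>b. 0 \<le> length_step t x y W v $ b" and "v $ a = 0"
  shows "length_step t x y W v $ a = 0"
  using assms(2)[of a] assms(1)[of y] assms(1)[of x] assms(3)
  by (cases t) (auto simp: length_step_def mult_le_0_iff divide_le_0_iff)

lemma length_step_winner_zero: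
  assumes "\<And>b. 0 \<le> v $ b" and "\<And>b. 0 \<le> length_step t x y W v $ b"
    and "v $ (case t of Top \<Rightarrow> x | Bot \<Rightarrow> y) = 0"
  shows "v $ x = 0 \<and> v $ y = 0"
  using assms(2)[of x] assms(2)[of y] assms(1)[of y] assms(1)[of x] assms(3)
  by (cases t) (auto simp: length_step_def mult_le_0_iff divide_le_0_iff split: if_splits)

section \<open>Iterating along a path\<close>

fun path_slope :: "'a::finite comb \<Rightarrow> (nat \<Rightarrow> arrow_type) \<Rightarrow> real^'a \<Rightarrow> nat \<Rightarrow> real^'a" where
  "path_slope p g w 0 = w"
| "path_slope p g w (Suc n) =
     slope_step (g n) (top_last (path_vertex p g n)) (bot_last (path_vertex p g n)) (path_slope p g w n)"

fun path_length :: "'a::finite comb \<Rightarrow> (nat \<Rightarrow> arrow_type) \<Rightarrow> real^'a \<Rightarrow> nat \<Rightarrow> real^'a \<Rightarrow> real^'a" where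
  "path_length p g w 0 v = v"
| "path_length p g w (Suc n) v =
     length_step (g n) (top_last (path_vertex p g n)) (bot_last (path_vertex p g n))
       (path_slope p g w n) (path_length p g w n v)"

fun path_length_inv :: "'a::finite comb \<Rightarrow> (nat \<Rightarrow> arrow_type) \<Rightarrow> real^'a \<Rightarrow> nat \<Rightarrow> real^'a \<Rightarrow> real^'a" where
  "path_length_inv p g w 0 z = z"
| "path_length_inv p g w (Suc n) z = path_length_inv p g w n
     (length_unstep (g n) (top_last (path_vertex p g n)) (bot_last (path_vertex p g n)) (path_slope p g w n) z)"

lemma path_length_path_length_inv:
  "nondegenerate_path p g \<Longrightarrow> path_length p g w n (path_length_inv p g w n z) = z"
  by (induction n arbitrary: z) (simp_all add: length_step_unstep nondegenerate_path_def)

lemma path_length_inv_path_length: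
  "nondegenerate_path p g \<Longrightarrow> path_length_inv p g w n (path_length p g w n v) = v"
  by (induction n arbitrary: v) (simp_all add: length_unstep_step nondegenerate_path_def)

lemma linear_path_length: "linear (path_length p g w n)"
proof (induction n)
  case 0
  then show ?case
    by (simp add: linear_id[unfolded id_def])
next
  case (Suc n)
  have "path_length p g w (Suc n) =
          length_step (g n) (top_last (path_vertex p g n)) (bot_last (path_vertex p g n)) (path_slope p g w n)
            \<circ> path_length p g w n"
    by (simp add: fun_eq_iff)
  then show ?case
    using linear_compose[OF Suc linear_length_step] by metis
qed

lemma path_slope_0: "path_slope p g 0 n = 0"
  by (induction n) (simp_all add: slope_step_0)

lemma inner_expm1_vec_path_length:
  "nondegenerate_path p g \<Longrightarrow> expm1_vec (path_slope p g w n) \<bullet> path_length p g w n v = expm1_vec w \<bullet> v"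
  by (induction n) (simp_all add: inner_expm1_vec_length_step nondegenerate_path_def)

lemma inner_path_slope_path_length_0:
  "nondegenerate_path p g \<Longrightarrow> path_slope p g w n \<bullet> path_length p g 0 n v = w \<bullet> v"
  by (induction n) (simp_all add: inner_slope_step_length_step_0 path_slope_0 nondegenerate_path_def)

lemma path_length_inv_nonneg_split:
  assumes "\<And>a. 0 \<le> z $ a" and "m \<le> n"
  shows "\<exists>y. (\<forall>a. 0 \<le> y $ a) \<and> path_length_inv p g w n z = path_length_inv p g w m y"
  using assms
proof (induction n arbitrary: z)
  case 0
  then show ?case
    by auto
next
  case (Suc n)
  show ?case
  proof (cases "m = Suc n")
    case False
    then show ?thesis
      using Suc.prems Suc.IH[OF length_unstep_nonneg] by simp
  qed (use Suc.prems in auto)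
qed

lemma path_length_path_length_inv_nonneg:
  assumes "nondegenerate_path p g" and "\<And>a. 0 \<le> z $ a" and "m \<le> n"
  shows "0 \<le> path_length p g w m (path_length_inv p g w n z) $ a"
  using path_length_inv_nonneg_split[OF assms(2,3)] path_length_path_length_inv[OF assms(1)] by metis

definition path_cone :: "'a::finite comb \<Rightarrow> (nat \<Rightarrow> arrow_type) \<Rightarrow> real^'a \<Rightarrow> (real^'a) set" where
  "path_cone p g w = {u. \<forall>m a. 0 \<le> path_length p g w m u $ a}"

lemma continuous_on_path_length_component: "continuous_on S (\<lambda>u. path_length p g w m u $ a)"
  using bounded_linear_compose[OF bounded_linear_vec_nth linear_path_length[unfolded linear_conv_bounded_linear]]
  by (rule linear_continuous_on)

lemma closed_path_length_nonneg: "closed {u. \<forall>a. 0 \<le> path_length p g w m u $ a}"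
  by (intro closed_Collect_all closed_Collect_le continuous_intros continuous_on_path_length_component)

lemma closed_path_cone: "closed (path_cone p g w)"
  unfolding path_cone_def by (intro closed_Collect_all closed_Collect_le continuous_intros continuous_on_path_length_component)

lemma convex_path_cone: "convex (path_cone p g w)"
proof (rule convexI)
  fix x y and u v :: real
  assume "x \<in> path_cone p g w" "y \<in> path_cone p g w" "0 \<le> u" "0 \<le> v"
  then show "u *\<^sub>R x + v *\<^sub>R y \<in> path_cone p g w"
    by (simp add: path_cone_def linear_add[OF linear_path_length] linear_cmul[OF linear_path_length])
qed

lemma incseq_finite_stabilizes:
  fixes Z :: "nat \<Rightarrow> 'a::finite set"
  assumes "incseq Z"
  obtains T where "\<And>n. T \<le> n \<Longrightarrow> Z n = Z T"
proof -
  have fin: "finite (range (\<lambda>n. card (Z n)))"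
    by (rule finite_subset[of _ "{0..CARD('a)}"]) (auto simp: card_mono)
  have "Max (range (\<lambda>n. card (Z n))) \<in> range (\<lambda>n. card (Z n))"
    using fin by (intro Max_in) auto
  then obtain T where T: "card (Z T) = Max (range (\<lambda>n. card (Z n)))"
    by (metis rangeE)
  have "Z n = Z T" if "T \<le> n" for n
  proof -
    have sub: "Z T \<subseteq> Z n"
      using assms that by (simp add: incseq_def)
    moreover have "card (Z n) \<le> card (Z T)"
      unfolding T using fin by (intro Max_ge) auto
    ultimately have "card (Z T) = card (Z n)"
      by (simp add: card_mono le_antisym)
    with sub show ?thesis
      using card_subset_eq[OF _ sub] by simp
  qed
  then show ?thesis
    by (rule that)
qed

text \<open>\<open>\<infinity>\<close>-completeness forces positivity: the set of letters of zero length can only grow along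
  the path, so it stabilises; once stable, a winner of zero length forces both last letters to
  have zero length, and since every letter wins infinitely often the set is empty or everything.\<close>

lemma path_length_pos:
  assumes nd: "nondegenerate_path p g" and ic: "infty_complete p g"
    and u: "u \<in> path_cone p g w" "u \<noteq> 0"
  shows "0 < path_length p g w m u $ a"
proof -
  define Z where "Z n = {a. path_length p g w n u $ a = 0}" for n
  have nonneg: "0 \<le> path_length p g w n u $ a" for n a
    using u(1) by (simp add: path_cone_def)
  note nonneg_Suc = nonneg[of "Suc n" for n, unfolded path_length.simps]
  have "Z n \<subseteq> Z (Suc n)" for n
    using length_step_zero_stays_zero[OF nonneg nonneg_Suc] by (auto simp: Z_def)
  then have "incseq Z"
    by (rule incseq_SucI)
  then obtain T where T: "\<And>n. T \<le> n \<Longrightarrow> Z n = Z T"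
    using incseq_finite_stabilizes by blast
  have "Z T \<noteq> UNIV"
  proof
    assume "Z T = UNIV"
    then have "path_length p g w T u = path_length p g w T 0"
      by (auto simp: Z_def vec_eq_iff linear_0[OF linear_path_length])
    then have "path_length_inv p g w T (path_length p g w T u) = path_length_inv p g w T (path_length p g w T 0)"
      by simp
    with u(2) show False
      by (simp add: path_length_inv_path_length[OF nd])
  qed
  moreover have "Z T = UNIV" if "c \<in> Z T" for c
  proof (rule infty_complete_closed_letters_eq_UNIV[OF ic that])
    fix n
    assume "T \<le> n" and "path_winner p g n \<in> Z T"
    then have "path_winner p g n \<in> Z n"
      using T[OF \<open>T \<le> n\<close>] by simp
    then have "path_length p g w n u $ (case g n of Top \<Rightarrow> top_last (path_vertex p g n)
                                               | Bot \<Rightarrow> bot_last (path_vertex p g n)) = 0"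
      unfolding Z_def path_winner_eq by simp
    then show "{top_last (path_vertex p g n), bot_last (path_vertex p g n)} \<subseteq> Z T"
      using length_step_winner_zero[OF nonneg nonneg_Suc] T[OF \<open>T \<le> n\<close>] by (auto simp: Z_def)
  qed
  ultimately have "Z T = {}"
    by blast
  moreover have "Z m \<subseteq> Z (max m T)"
    using \<open>incseq Z\<close> by (simp add: incseq_def)
  ultimately have "Z m = {}"
    using T[of "max m T"] by auto
  then show ?thesis
    using nonneg[of m a] by (auto simp: Z_def order_le_less)
qed

section \<open>Nonnegative vectors in a hyperplane\<close>

definition length_simplex :: "(real^'a::finite) set" where
  "length_simplex = {u. (\<forall>a. 0 \<le> u $ a) \<and> (\<Sum>a\<in>UNIV. u $ a) = 1}"

lemma compact_length_simplex: "compact (length_simplex :: (real^'a::finite) set)"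
proof -
  have "closed length_simplex"
    unfolding length_simplex_def
    by (intro closed_Collect_conj closed_Collect_all closed_Collect_le closed_Collect_eq continuous_intros)
  moreover have "bounded (length_simplex :: (real^'a) set)"
    unfolding bounded_iff
  proof (intro exI ballI)
    fix u :: "real^'a"
    assume "u \<in> length_simplex"
    then have "(\<Sum>a\<in>UNIV. \<bar>u $ a\<bar>) = 1"
      by (simp add: length_simplex_def)
    then show "norm u \<le> 1"
      using norm_le_l1_cart[of u] by simp
  qed
  ultimately show ?thesis
    by (simp add: compact_eq_bounded_closed)
qed

lemma convex_length_simplex: "convex length_simplex"
  unfolding length_simplex_def
  by (rule convexI) (simp add: sum.distrib flip: sum_distrib_left)

lemma length_simplex_nonzero: "u \<in> length_simplex \<Longrightarrow> u \<noteq> 0"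
  by (auto simp: length_simplex_def)

lemma sum_pos_if_nonneg_nonzero:
  fixes v :: "real^'a::finite"
  assumes "\<And>a. 0 \<le> v $ a" and "v \<noteq> 0"
  shows "0 < (\<Sum>a\<in>UNIV. v $ a)"
proof -
  obtain b where "v $ b \<noteq> 0"
    using assms(2) by (auto simp: vec_eq_iff)
  then have "0 < v $ b"
    using assms(1)[of b] by simp
  moreover have "v $ b \<le> (\<Sum>a\<in>UNIV. v $ a)"
    by (rule member_le_sum) (simp_all add: assms(1))
  ultimately show ?thesis
    by linarith
qed

text \<open>The sets \<open>F n\<close> decrease and are compact; each is nonempty because the pull-back of a basis
  vector along the first \<open>n\<close> steps, normalised, lies in it.\<close>

lemma exists_path_cone_inner_nonpos:
  assumes nd: "nondegenerate_path p g"
    and pull: "\<And>n. \<exists>a. c \<bullet> path_length_inv p g w n (axis a 1) \<le> 0"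
  shows "\<exists>u \<in> path_cone p g w \<inter> length_simplex. c \<bullet> u \<le> 0"
proof -
  define F where "F n = length_simplex \<inter> {u. c \<bullet> u \<le> 0}
                        \<inter> (\<Inter>m\<in>{..n}. {u. \<forall>a. 0 \<le> path_length p g w m u $ a})" for n
  have "compact (F n)" for n
    unfolding F_def
    by (intro compact_Int_closed compact_length_simplex closed_halfspace_le closed_INT ballI closed_path_length_nonneg)
  moreover have "F n \<noteq> {}" for n
  proof -
    obtain a where a: "c \<bullet> path_length_inv p g w n (axis a 1) \<le> 0"
      using pull by blast
    define v where "v = path_length_inv p g w n (axis a 1)"
    have v_nonneg: "0 \<le> path_length p g w m v $ b" if "m \<le> n" for m b
      unfolding v_def by (rule path_length_path_length_inv_nonneg[OF nd _ that]) (simp add: axis_def)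
    have "v \<noteq> 0"
    proof
      assume "v = 0"
      then have "path_length p g w n v = 0"
        by (simp add: linear_0[OF linear_path_length])
      then show False
        by (simp add: v_def path_length_path_length_inv[OF nd] axis_eq_0_iff)
    qed
    moreover have "0 \<le> v $ b" for b
      using v_nonneg[of 0 b] by simp
    ultimately have s: "0 < (\<Sum>b\<in>UNIV. v $ b)"
      by (intro sum_pos_if_nonneg_nonzero)
    have "(1 / (\<Sum>b\<in>UNIV. v $ b)) *\<^sub>R v \<in> F n"
      using s v_nonneg \<open>\<And>b. 0 \<le> v $ b\<close> a
      by (auto simp: F_def length_simplex_def linear_cmul[OF linear_path_length]
          divide_nonpos_pos simp flip: v_def sum_divide_distrib)
    then show ?thesis
      by blast
  qed
  moreover have "F n \<subseteq> F m" if "m \<le> n" for m n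
    using that by (auto simp: F_def)
  ultimately obtain u where "u \<in> \<Inter>(range F)"
    using compact_nest[of F] by blast
  then have "u \<in> path_cone p g w \<inter> length_simplex" and "c \<bullet> u \<le> 0"
    by (auto simp: F_def path_cone_def)
  then show ?thesis
    by blast
qed

lemma exists_path_cone_orthogonal:
  assumes nd: "nondegenerate_path p g"
    and "\<And>n. \<exists>a. c \<bullet> path_length_inv p g w n (axis a 1) \<le> 0"
    and "\<And>n. \<exists>a. 0 \<le> c \<bullet> path_length_inv p g w n (axis a 1)"
  shows "\<exists>u \<in> path_cone p g w \<inter> length_simplex. c \<bullet> u = 0"
proof -
  obtain u1 where u1: "u1 \<in> path_cone p g w \<inter> length_simplex" "c \<bullet> u1 \<le> 0"
    using exists_path_cone_inner_nonpos[OF nd assms(2)] by blast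
  obtain u2 where u2: "u2 \<in> path_cone p g w \<inter> length_simplex" "-c \<bullet> u2 \<le> 0"
    using exists_path_cone_inner_nonpos[OF nd, of "-c"] assms(3) by auto
  have "connected (path_cone p g w \<inter> length_simplex)"
    by (intro convex_connected convex_Int convex_path_cone convex_length_simplex)
  from connected_ivt_hyperplane[OF this u1(1) u2(1), of c 0] u1(2) u2(2) show ?thesis
    by simp
qed

lemma exists_positive_path_length_orthogonal:
  assumes nd: "nondegenerate_path p g" and ic: "infty_complete p g"
    and dual: "\<And>n v. C n \<bullet> path_length p g w n v = c \<bullet> v"
    and signs: "\<And>n. \<exists>a. C n $ a \<le> 0" "\<And>n. \<exists>a. 0 \<le> C n $ a"
  shows "\<exists>u. (\<forall>n a. 0 < path_length p g w n u $ a) \<and> c \<bullet> u = 0"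
proof -
  have "c \<bullet> path_length_inv p g w n (axis a 1) = C n $ a" for n a
    using dual[of n "path_length_inv p g w n (axis a 1)"]
    by (simp add: path_length_path_length_inv[OF nd] inner_axis)
  then obtain u where "u \<in> path_cone p g w \<inter> length_simplex" "c \<bullet> u = 0"
    using exists_path_cone_orthogonal[OF nd, of c w] signs by metis
  then show ?thesis
    using path_length_pos[OF nd ic] length_simplex_nonzero by blast
qed

section \<open>Affine interval exchange maps along the path\<close>

definition affine_iem :: "'a::finite comb \<Rightarrow> real^'a \<Rightarrow> real^'a \<Rightarrow> 'a aiem" where
  "affine_iem q W x = \<lparr>ptop = fst q, pbot = snd q, ltop = x, lbot = (\<chi> a. exp (W $ a) * x $ a)\<rparr>"

lemma comb_of_affine_iem [simp]: "comb_of (affine_iem q W x) = q"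
  by (simp add: comb_of_def affine_iem_def)

lemma ltop_affine_iem [simp]: "ltop (affine_iem q W x) = x"
  by (simp add: affine_iem_def)

lemma standard_iem_eq_affine_iem: "standard_iem p l = affine_iem p 0 l"
  by (simp add: standard_iem_def affine_iem_def)

lemma is_aiem_affine_iem:
  "is_aiem (affine_iem q W x) \<longleftrightarrow> valid_comb q \<and> (\<forall>a. 0 < x $ a) \<and> expm1_vec W \<bullet> x = 0"
  by (auto simp: is_aiem_def affine_iem_def comb_of_def inner_expm1_vec)

lemma u_top_affine_iem_top_last:
  assumes "valid_comb q"
  shows "u_top (affine_iem q W x) (top_last q) = (\<Sum>b\<in>UNIV. x $ b) - x $ top_last q"
proof -
  have "fst q b < CARD('a) \<longleftrightarrow> b \<noteq> top_last q" for b
    using valid_comb_top_last(1,3)[OF assms, of b] by (simp add: order_less_le)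
  then have "{b. fst q b < fst q (top_last q)} = UNIV - {top_last q}"
    using valid_comb_top_last(1)[OF assms, of "top_last q"] by auto
  then show ?thesis
    by (simp add: u_top_def affine_iem_def sum_diff1)
qed

lemma u_bot_affine_iem_bot_last:
  assumes "valid_comb q"
  shows "u_bot (affine_iem q W x) (bot_last q) =
           (\<Sum>b\<in>UNIV. exp (W $ b) * x $ b) - exp (W $ bot_last q) * x $ bot_last q"
proof -
  have "snd q b < CARD('a) \<longleftrightarrow> b \<noteq> bot_last q" for b
    using valid_comb_bot_last(1,3)[OF assms, of b] by (simp add: order_less_le)
  then have "{b. snd q b < snd q (bot_last q)} = UNIV - {bot_last q}"
    using valid_comb_bot_last(1)[OF assms, of "bot_last q"] by auto
  then show ?thesis
    by (simp add: u_bot_def affine_iem_def sum_diff1)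
qed

text \<open>When the total lengths agree, comparing the left endpoints of the last intervals amounts
  to comparing the lengths of the last intervals themselves.\<close>

lemma rv_type_affine_iem:
  assumes "valid_comb q" and "expm1_vec W \<bullet> x = 0"
  shows "rv_type (affine_iem q W x) =
           (if exp (W $ bot_last q) * x $ bot_last q < x $ top_last q then Top else Bot)"
  using assms(2)
  by (simp add: rv_type_def u_top_affine_iem_top_last[OF assms(1)] u_bot_affine_iem_bot_last[OF assms(1)]
      inner_expm1_vec)

lemma rv_type_affine_iem_eq:
  assumes "valid_comb q" and "expm1_vec W \<bullet> x = 0"
    and "\<forall>a. 0 < length_step t (top_last q) (bot_last q) W x $ a"
  shows "rv_type (affine_iem q W x) = t"
proof (cases t)
  case Top
  with assms(3) have "exp (W $ bot_last q) * x $ bot_last q < x $ top_last q"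
    by (auto simp: length_step_def dest: spec[of _ "top_last q"])
  with Top show ?thesis
    by (simp add: rv_type_affine_iem[OF assms(1,2)])
next
  case Bot
  with assms(3) have "x $ top_last q / exp (W $ bot_last q) < x $ bot_last q"
    by (auto simp: length_step_def dest: spec[of _ "bot_last q"])
  with Bot show ?thesis
    by (simp add: rv_type_affine_iem[OF assms(1,2)] divide_less_eq mult.commute)
qed

lemma rv_step_affine_iem:
  assumes "top_last q \<noteq> bot_last q" and "\<forall>a. 0 < x $ a" and "rv_type (affine_iem q W x) = t"
  shows "rv_step (affine_iem q W x) =
           affine_iem (rauzy_move t q) (slope_step t (top_last q) (bot_last q) W)
             (length_step t (top_last q) (bot_last q) W x)"
proof -
  have "0 < x $ top_last q" "0 < x $ bot_last q"
    using assms(2) by simp_all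
  then show ?thesis
    unfolding rv_step_def Let_def comb_of_affine_iem assms(3)
    using assms(1)
    by (cases t) (simp_all add: affine_iem_def slope_step_def length_step_def vec_eq_iff exp_add field_simps)
qed

lemma has_rv_path_affine_iem_iff:
  assumes nd: "nondegenerate_path p g" and bal: "expm1_vec w \<bullet> v = 0"
  shows "has_rv_path (affine_iem p w v) g \<longleftrightarrow> (\<forall>n a. 0 < path_length p g w n v $ a)"
proof -
  define D where "D n = affine_iem (path_vertex p g n) (path_slope p g w n) (path_length p g w n v)" for n
  have valid: "valid_comb (path_vertex p g n)" and ne: "top_last (path_vertex p g n) \<noteq> bot_last (path_vertex p g n)" for n
    using nd by (simp_all add: nondegenerate_path_def)
  have bal_n: "expm1_vec (path_slope p g w n) \<bullet> path_length p g w n v = 0" for n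
    using inner_expm1_vec_path_length[OF nd] bal by simp
  have step: "rv_step (D n) = D (Suc n)" if "\<forall>a. 0 < path_length p g w n v $ a" "rv_type (D n) = g n" for n
    using rv_step_affine_iem[OF ne that[unfolded D_def]] by (simp add: D_def)
  show ?thesis
  proof
    assume path: "has_rv_path (affine_iem p w v) g"
    have "(rv_step ^^ n) (affine_iem p w v) = D n" for n
    proof (induction n)
      case 0
      then show ?case
        by (simp add: D_def)
    next
      case (Suc n)
      then have "is_aiem (D n)" and "rv_type (D n) = g n"
        using path[unfolded has_rv_path_def, rule_format, of n] by simp_all
      then show ?case
        using Suc step by (simp add: D_def is_aiem_affine_iem)
    qed
    with path show "\<forall>n a. 0 < path_length p g w n v $ a"
      by (auto simp: has_rv_path_def D_def is_aiem_affine_iem)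
  next
    assume pos: "\<forall>n a. 0 < path_length p g w n v $ a"
    have type: "rv_type (D n) = g n" for n
      using rv_type_affine_iem_eq[OF valid bal_n] pos[rule_format, of "Suc n"] by (simp add: D_def)
    have "(rv_step ^^ n) (affine_iem p w v) = D n" for n
      by (induction n) (simp_all add: D_def[of 0] step pos type)
    then show "has_rv_path (affine_iem p w v) g"
      using valid pos bal_n type by (simp add: has_rv_path_def D_def is_aiem_affine_iem)
  qed
qed

lemma mem_Aff_iff:
  assumes "nondegenerate_path p g"
  shows "D \<in> Aff p g w \<longleftrightarrow>
           (\<exists>x. D = affine_iem p w x \<and> expm1_vec w \<bullet> x = 0 \<and> (\<forall>n a. 0 < path_length p g w n x $ a))"
proof
  assume D: "D \<in> Aff p g w"
  then have D_eq: "D = affine_iem p w (ltop D)"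
    by (cases D) (auto simp: Aff_def affine_iem_def comb_of_def vec_eq_iff)
  moreover have bal: "expm1_vec w \<bullet> ltop D = 0"
    using D D_eq is_aiem_affine_iem[of p w "ltop D"] by (simp add: Aff_def)
  moreover have "\<forall>n a. 0 < path_length p g w n (ltop D) $ a"
    using D D_eq has_rv_path_affine_iem_iff[OF assms bal] by (simp add: Aff_def)
  ultimately show "\<exists>x. D = affine_iem p w x \<and> expm1_vec w \<bullet> x = 0 \<and> (\<forall>n a. 0 < path_length p g w n x $ a)"
    by blast
next
  assume "\<exists>x. D = affine_iem p w x \<and> expm1_vec w \<bullet> x = 0 \<and> (\<forall>n a. 0 < path_length p g w n x $ a)"
  then obtain x where x: "D = affine_iem p w x" "expm1_vec w \<bullet> x = 0" "\<forall>n a. 0 < path_length p g w n x $ a"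
    by blast
  have "valid_comb (path_vertex p g 0)"
    using assms unfolding nondegenerate_path_def by blast
  then have "is_aiem (affine_iem p w x)"
    using x(2) x(3)[rule_format, of 0] by (simp add: is_aiem_affine_iem)
  moreover have "has_rv_path (affine_iem p w x) g"
    using has_rv_path_affine_iem_iff[OF assms x(2)] x(3) by simp
  ultimately show "D \<in> Aff p g w"
    unfolding x(1) Aff_def
    by (simp add: affine_iem_def comb_of_def)
qed

text \<open>With a single letter the top and bottom interval coincide, the arrow has bottom type and
  the step leaves a bottom interval of length zero.\<close>

lemma not_has_rv_path_if_CARD_1:
  fixes D :: "'a::finite aiem"
  assumes "CARD('a) = 1"
  shows "\<not> has_rv_path D g"
proof
  assume path: "has_rv_path D g"
  then have "is_aiem D" and "is_aiem (rv_step D)"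
    unfolding has_rv_path_def by (metis funpow_0, metis funpow_0 funpow.simps(2) o_apply)
  obtain a :: 'a where UNIV: "UNIV = {a}"
    using assms card_1_singletonE by blast
  then have last: "top_last (comb_of D) = a" "bot_last (comb_of D) = a" and single: "\<And>b. b = a"
    by blast+
  have "{b. f b < f a} = {}" for f :: "'a \<Rightarrow> nat"
    using single by (metis empty_Collect_eq less_irrefl)
  then have "u_top D a = 0" "u_bot D a = 0"
    by (simp_all add: u_top_def u_bot_def)
  then have "rv_type D = Bot"
    by (simp add: rv_type_def last)
  moreover have "ltop D $ a = lbot D $ a"
    using \<open>is_aiem D\<close> by (simp add: is_aiem_def UNIV)
  ultimately have "lbot (rv_step D) $ a = 0"
    by (simp add: rv_step_def Let_def last)
  with \<open>is_aiem (rv_step D)\<close> show False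
    by (simp add: is_aiem_def) (metis less_irrefl)
qed

lemma exists_nonpos_if_inner_pos_eq_0:
  fixes c x :: "real^'a::finite"
  assumes "\<forall>a. 0 < x $ a" and "c \<bullet> x = 0"
  shows "\<exists>a. c $ a \<le> 0"
proof (rule ccontr)
  assume "\<nexists>a. c $ a \<le> 0"
  then have "0 < c \<bullet> x"
    unfolding inner_vec_def inner_real_def using assms(1) by (intro sum_pos) (auto simp: not_le)
  with assms(2) show False
    by simp
qed

lemma exists_nonneg_if_inner_pos_eq_0:
  fixes c x :: "real^'a::finite"
  assumes "\<forall>a. 0 < x $ a" and "c \<bullet> x = 0"
  shows "\<exists>a. 0 \<le> c $ a"
  using exists_nonpos_if_inner_pos_eq_0[OF assms(1), of "-c"] assms(2) by auto

lemma Aff_nonempty_imp_standard_path: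
  assumes nd: "nondegenerate_path p g" and ic: "infty_complete p g" and "Aff p g w \<noteq> {}"
  shows "\<exists>l. (\<forall>a. 0 < l $ a) \<and> (\<Sum>a\<in>UNIV. l $ a * w $ a) = 0 \<and> has_rv_path (standard_iem p l) g"
proof -
  obtain x where x: "expm1_vec w \<bullet> x = 0" "\<forall>n a. 0 < path_length p g w n x $ a"
    using assms(3) mem_Aff_iff[OF nd] by blast
  have defect: "expm1_vec (path_slope p g w n) \<bullet> path_length p g w n x = 0" for n
    using inner_expm1_vec_path_length[OF nd] x(1) by simp
  have "\<exists>a. path_slope p g w n $ a \<le> 0" "\<exists>a. 0 \<le> path_slope p g w n $ a" for n
    using exists_nonpos_if_inner_pos_eq_0[OF _ defect] exists_nonneg_if_inner_pos_eq_0[OF _ defect] x(2)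
    by (simp_all add: expm1_vec_def)
  then obtain u where u: "\<forall>n a. 0 < path_length p g 0 n u $ a" "w \<bullet> u = 0"
    using exists_positive_path_length_orthogonal[OF nd ic inner_path_slope_path_length_0[OF nd]] by blast
  have "has_rv_path (standard_iem p u) g"
    using has_rv_path_affine_iem_iff[OF nd, of 0 u] u(1) by (simp add: standard_iem_eq_affine_iem)
  moreover have "(\<Sum>a\<in>UNIV. u $ a * w $ a) = 0"
    using u(2) by (simp add: inner_vec_def mult.commute)
  ultimately show ?thesis
    using u(1) by (metis path_length.simps(1))
qed

lemma standard_path_imp_Aff_nonempty:
  assumes nd: "nondegenerate_path p g" and ic: "infty_complete p g"
    and l: "\<forall>a. 0 < l $ a" "(\<Sum>a\<in>UNIV. l $ a * w $ a) = 0" "has_rv_path (standard_iem p l) g"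
  shows "Aff p g w \<noteq> {}"
proof -
  have pos: "\<forall>a. 0 < path_length p g 0 n l $ a" for n
    using has_rv_path_affine_iem_iff[OF nd, of 0 l] l(3) by (simp add: standard_iem_eq_affine_iem)
  have pairing: "path_slope p g w n \<bullet> path_length p g 0 n l = 0" for n
    using inner_path_slope_path_length_0[OF nd] l(2) by (simp add: inner_vec_def mult.commute)
  have "\<exists>a. expm1_vec (path_slope p g w n) $ a \<le> 0" "\<exists>a. 0 \<le> expm1_vec (path_slope p g w n) $ a" for n
    using exists_nonpos_if_inner_pos_eq_0[OF pos pairing] exists_nonneg_if_inner_pos_eq_0[OF pos pairing]
    by (simp_all add: expm1_vec_def)
  then obtain u where "\<forall>n a. 0 < path_length p g w n u $ a" "expm1_vec w \<bullet> u = 0"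
    using exists_positive_path_length_orthogonal[OF nd ic inner_expm1_vec_path_length[OF nd]] by blast
  then have "affine_iem p w u \<in> Aff p g w"
    using mem_Aff_iff[OF nd] by blast
  then show ?thesis
    by blast
qed

lemma Aff1_eq:
  assumes nd: "nondegenerate_path p g" and ic: "infty_complete p g"
  shows "Aff1 p g w = path_cone p g w \<inter> length_simplex \<inter> {x. expm1_vec w \<bullet> x = 0}"
proof (intro set_eqI iffI)
  fix x
  assume "x \<in> Aff1 p g w"
  then obtain D where D: "D \<in> Aff p g w" "x = ltop D" "(\<Sum>a\<in>UNIV. x $ a) = 1"
    by (auto simp: Aff1_def)
  with mem_Aff_iff[OF nd] have "expm1_vec w \<bullet> x = 0" "\<forall>n a. 0 < path_length p g w n x $ a"
    by auto
  with D(3) show "x \<in> path_cone p g w \<inter> length_simplex \<inter> {x. expm1_vec w \<bullet> x = 0}"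
    by (auto simp: path_cone_def length_simplex_def less_imp_le dest: spec[of _ 0])
next
  fix x
  assume x: "x \<in> path_cone p g w \<inter> length_simplex \<inter> {x. expm1_vec w \<bullet> x = 0}"
  then have "\<forall>n a. 0 < path_length p g w n x $ a"
    using path_length_pos[OF nd ic] length_simplex_nonzero by blast
  with x have "affine_iem p w x \<in> Aff p g w"
    using mem_Aff_iff[OF nd] by blast
  with x show "x \<in> Aff1 p g w"
    unfolding Aff1_def length_simplex_def by force
qed

theorem mainTheorem5:
  fixes p :: "'a::finite comb" and g :: "nat \<Rightarrow> arrow_type" and w :: "real ^ 'a"
  assumes "irreducible p"
    and "infty_complete p g"
    and "w \<noteq> 0"
  shows "(Aff p g w \<noteq> {} \<longleftrightarrow>
           (\<exists>l :: real ^ 'a. (\<forall>a. l $ a > 0) \<and> (\<Sum>a\<in>UNIV. l $ a * w $ a) = 0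
              \<and> has_rv_path (standard_iem p l) g))
       \<and> (Aff p g w \<noteq> {} \<longrightarrow> convex (Aff1 p g w) \<and> compact (Aff1 p g w))"
proof (cases "CARD('a) = 1")
  case True
  then show ?thesis
    using not_has_rv_path_if_CARD_1 by (auto simp: Aff_def)
next
  case False
  moreover have "0 < CARD('a)"
    by simp
  ultimately have "2 \<le> CARD('a)"
    by linarith
  with assms(1) have nd: "nondegenerate_path p g"
    by (rule irreducible_imp_nondegenerate_path)
  have "convex (Aff1 p g w)"
    unfolding Aff1_eq[OF nd assms(2)]
    by (intro convex_Int convex_path_cone convex_length_simplex convex_hyperplane)
  moreover have "compact (Aff1 p g w)"
    unfolding Aff1_eq[OF nd assms(2)]
    by (intro compact_Int_closed closed_Int_compact closed_path_cone compact_length_simplex closed_hyperplane)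
  ultimately show ?thesis
    using Aff_nonempty_imp_standard_path[OF nd assms(2)] standard_path_imp_Aff_nonempty[OF nd assms(2)]
    by blast
qed

end
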